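(* Let $G$ be a graph with maximum degree $d\ge1$ and let $E$ be a finite subset of the edges of $G$. Then there is an ordering $e_1,e_2,\dots,e_{|E|}$ of the elements of $E$ such that the number of disconnected edges in this ordering is at least $\lfloor |E|/(2d)\rfloor$, where an edge $e_j$ is called disconnected if it shares no vertex with any of the edges $e_1,\dots,e_{j-1}$. *)

theory Defs
  imports Main
begin

definition simple_graph :: "('a \<Rightarrow> 'a \<Rightarrow> bool) \<Rightarrow> bool" where
  "simple_graph Adj \<longleftrightarrow> (\<forall>u v. Adj u v \<longrightarrow> Adj v u) \<and> (\<forall>v. \<not> Adj v v)"

definition graph_edges :: "('a \<Rightarrow> 'a \<Rightarrow> bool) \<Rightarrow> 'a set set" where
  "graph_edges Adj = {{u, v} | u v. Adj u v}"

definition vdegree :: "('a \<Rightarrow> 'a \<Rightarrow> bool) \<Rightarrow> 'a \<Rightarrow> nat" where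
  "vdegree Adj v = card {u. Adj v u}"

definition max_degree :: "('a \<Rightarrow> 'a \<Rightarrow> bool) \<Rightarrow> nat \<Rightarrow> bool" where
  "max_degree Adj d \<longleftrightarrow>
     (\<forall>v. finite {u. Adj v u} \<and> vdegree Adj v \<le> d) \<and> (\<exists>v. vdegree Adj v = d)"

text \<open>In an ordering es = [e_1, ..., e_n] (0-indexed), position j is disconnected if
e_j shares no vertex with any earlier edge.\<close>
definition disconnected_at :: "'a set list \<Rightarrow> nat \<Rightarrow> bool" where
  "disconnected_at es j \<longleftrightarrow> (\<forall>i<j. es ! j \<inter> es ! i = {})"

definition num_disconnected :: "'a set list \<Rightarrow> nat" where
  "num_disconnected es = card {j. j < length es \<and> disconnected_at es j}"

end

theory Submission
  imports Defs
begin

text \<open>An edge meets at most \<open>2d\<close> edges (itself included), since every edge meeting it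
contains one of its two endpoints. Greedily picking an edge and discarding everything it meets
therefore yields a matching \<open>M \<subseteq> E\<close> with \<open>|E| \<le> 2d |M|\<close>. Listing the edges of \<open>M\<close> first,
each of them is disconnected from its predecessors.\<close>

lemma card_edges_meeting_le:
  assumes "simple_graph Adj"
    and finite_nbrs: "\<And>v. finite {u. Adj v u}"
    and degree_le: "\<And>v. vdegree Adj v \<le> d"
    and "E \<subseteq> graph_edges Adj" "e \<in> E"
  shows "card {f \<in> E. f \<inter> e \<noteq> {}} \<le> 2 * d"
proof -
  obtain u v where e: "e = {u, v}" using assms(4,5) unfolding graph_edges_def by blast
  let ?star = "\<lambda>x. (\<lambda>w. {x, w}) ` {w. Adj x w}"
  have sym: "Adj a b \<Longrightarrow> Adj b a" for a b
    using assms(1) unfolding simple_graph_def by blast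
  have "{f \<in> E. f \<inter> e \<noteq> {}} \<subseteq> ?star u \<union> ?star v"
  proof
    fix f assume "f \<in> {f \<in> E. f \<inter> e \<noteq> {}}"
    then obtain a b where f: "f = {a, b}" "Adj a b" and "{a, b} \<inter> {u, v} \<noteq> {}"
      using assms(4) unfolding graph_edges_def e by blast
    then consider "a = u \<or> a = v" | "b = u \<or> b = v" by blast
    then show "f \<in> ?star u \<union> ?star v"
      by cases (use f sym[OF f(2)] in \<open>auto simp: insert_commute\<close>)
  qed
  then have "card {f \<in> E. f \<inter> e \<noteq> {}} \<le> card (?star u \<union> ?star v)"
    by (intro card_mono) (simp_all add: finite_nbrs)
  also have "\<dots> \<le> card {w. Adj u w} + card {w. Adj v w}"
    by (intro card_Un_le[THEN order_trans] add_mono card_image_le finite_nbrs)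
  also have "\<dots> \<le> 2 * d"
    using degree_le[of u] degree_le[of v] unfolding vdegree_def by simp
  finally show ?thesis .
qed

lemma greedy_pairwise_disjnt_subfamily:
  fixes E :: "'a set set"
  assumes "finite E" "{} \<notin> E"
    and "\<And>e. e \<in> E \<Longrightarrow> card {f \<in> E. f \<inter> e \<noteq> {}} \<le> k"
  shows "\<exists>M \<subseteq> E. pairwise disjnt M \<and> card E \<le> k * card M"
  using assms
proof (induction "card E" arbitrary: E rule: less_induct)
  case less
  show ?case
  proof (cases "E = {}")
    case False
    then obtain e where "e \<in> E" by auto
    define N where "N = {f \<in> E. f \<inter> e \<noteq> {}}"
    have "e \<in> N" "N \<subseteq> E" using \<open>e \<in> E\<close> \<open>{} \<notin> E\<close> unfolding N_def by auto
    then have "card (E - N) < card E"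
      using less.prems(1) by (intro psubset_card_mono) auto
    moreover have "card {f \<in> E - N. f \<inter> e' \<noteq> {}} \<le> k" if "e' \<in> E - N" for e'
    proof -
      have "card {f \<in> E - N. f \<inter> e' \<noteq> {}} \<le> card {f \<in> E. f \<inter> e' \<noteq> {}}"
        using less.prems(1) by (intro card_mono) auto
      then show ?thesis using less.prems(3)[of e'] that by simp
    qed
    ultimately obtain M where M: "M \<subseteq> E - N" "pairwise disjnt M" "card (E - N) \<le> k * card M"
      using less.hyps[of "E - N"] less.prems(1,2) by auto
    have "M \<subseteq> E" "e \<notin> M" "finite M"
      using M(1) \<open>e \<in> N\<close> less.prems(1) finite_subset by auto
    have "pairwise disjnt (insert e M)"
      using M(1,2) unfolding N_def by (auto simp: pairwise_insert disjnt_def)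
    moreover have "card E \<le> k * card (insert e M)"
    proof -
      have "card E = card N + card (E - N)"
        using \<open>N \<subseteq> E\<close> less.prems(1) card_Diff_subset[of N E] card_mono[of E N]
        by (simp add: finite_subset)
      also have "\<dots> \<le> k + k * card M"
        using less.prems(3)[OF \<open>e \<in> E\<close>] M(3) unfolding N_def by simp
      finally show ?thesis using \<open>e \<notin> M\<close> \<open>finite M\<close> by simp
    qed
    ultimately show ?thesis using \<open>M \<subseteq> E\<close> \<open>e \<in> E\<close> by blast
  qed simp
qed

lemma length_le_num_disconnected_append:
  assumes "distinct ms" "pairwise disjnt (set ms)"
  shows "length ms \<le> num_disconnected (ms @ rs)"
proof -
  have "disconnected_at (ms @ rs) j" if "j < length ms" for j
    unfolding disconnected_at_def
  proof (intro allI impI)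
    fix i assume "i < j"
    then have "ms ! i \<noteq> ms ! j"
      using that assms(1) by (simp add: nth_eq_iff_index_eq)
    then show "(ms @ rs) ! j \<inter> (ms @ rs) ! i = {}"
      using that \<open>i < j\<close> assms(2)
      by (simp add: nth_append pairwise_def disjnt_def Int_commute)
  qed
  then have "{..<length ms} \<subseteq> {j. j < length (ms @ rs) \<and> disconnected_at (ms @ rs) j}"
    by auto
  then have "card {..<length ms} \<le> num_disconnected (ms @ rs)"
    unfolding num_disconnected_def by (intro card_mono) auto
  then show ?thesis by simp
qed

theorem lemma6p11:
  fixes Adj :: "'a \<Rightarrow> 'a \<Rightarrow> bool" and d :: nat and E :: "'a set set"
  assumes "simple_graph Adj"
    and "max_degree Adj d"
    and "d \<ge> 1"
    and "E \<subseteq> graph_edges Adj"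
    and "finite E"
  shows "\<exists>es. distinct es \<and> set es = E \<and> num_disconnected es \<ge> card E div (2 * d)"
proof -
  have "{} \<notin> E" using assms(4) unfolding graph_edges_def by auto
  moreover have "card {f \<in> E. f \<inter> e \<noteq> {}} \<le> 2 * d" if "e \<in> E" for e
    using assms(1,2,4) that by (intro card_edges_meeting_le) (auto simp: max_degree_def)
  ultimately obtain M where M: "M \<subseteq> E" "pairwise disjnt M" "card E \<le> 2 * d * card M"
    using greedy_pairwise_disjnt_subfamily[OF assms(5)] by blast
  obtain ms where ms: "distinct ms" "set ms = M"
    using finite_distinct_list[of M] M(1) assms(5) finite_subset by blast
  obtain rs where rs: "distinct rs" "set rs = E - M"
    using finite_distinct_list[of "E - M"] assms(5) by blast
  have "card E div (2 * d) \<le> card M"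
    using div_le_mono[OF M(3), of "2 * d"] assms(3) by simp
  also have "\<dots> \<le> num_disconnected (ms @ rs)"
    using length_le_num_disconnected_append[OF ms(1)] ms M(2) distinct_card[OF ms(1)] by simp
  finally show ?thesis
    using ms rs M(1) by (intro exI[of _ "ms @ rs"]) auto
qed

end
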